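(* Let $N\ge 2$ and $\beta\in\{2,4\}$. (Complex case, $\beta=2$.) Let $R=[\rho_{jk}]$ range over $N\times N$ complex correlation matrices (Hermitian positive definite with all diagonal entries equal to $1$), with Cholesky factorisation $R=LL^*$, $L=[l_{jk}]$ lower triangular with $l_{jj}>0$. Parametrise $L$ by angles $\theta_{jp}\in(0,\pi)$, $2\le j\le N$, $1\le p\le 2j-2$, via $$l_{jk}=\left(\cos\theta_{j,2k-1}+i\cos\theta_{j,2k}\sin\theta_{j,2k-1}\right)\prod_{p=1}^{2k-2}\sin\theta_{jp}\ \ (1\le k\le j-1),\qquad l_{jj}=\prod_{p=1}^{2j-2}\sin\theta_{jp},$$ and $l_{11}=1$. Then the absolute value of the Jacobian determinant of the map from the angles $\{\theta_{jp}\}$ to the real coordinates $\{\mathrm{Re}\,\rho_{jk},\mathrm{Im}\,\rho_{jk}\}_{1\le k<j\le N}$ is $$\prod_{j=2}^{N}\prod_{p=1}^{2j-2}\left(\sin\theta_{jp}\right)^{2N-p-1}.$$ (Quaternion case, $\beta=4$.) Let $R$ range over $N\times N$ quaternion correlation matrices: $2N\times 2N$ complex Hermitian positive definite matrices composed of $2\times2$ blocks of the form $\begin{bmatrix}z&w\\-\bar w&\bar z\end{bmatrix}$, with all diagonal blocks equal to the $2\times 2$ identity. Write $R=LL^*$ with $L$ block lower triangular of the same block form, whose diagonal blocks are positive multiples $l_{jj}I_2$ of the identity. For an off-diagonal block $l_{jk}$ with parameters $(z,w)$ write $l_{jk}^{(1)}=\mathrm{Re}\,z$, $l_{jk}^{(2)}=\mathrm{Im}\,z$,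 $l_{jk}^{(3)}=\mathrm{Re}\,w$, $l_{jk}^{(4)}=\mathrm{Im}\,w$. Parametrise by angles $\theta_{jp}\in(0,\pi)$, $2\le j\le N$, $1\le p\le 4j-4$, via $$l_{jk}^{(s)}=\cos\theta_{j,4(k-1)+s}\left(\prod_{m=1}^{s-1}\sin\theta_{j,4(k-1)+m}\right)\prod_{p=1}^{4(k-1)}\sin\theta_{jp}\ \ (1\le k\le j-1,\ 1\le s\le 4),\qquad l_{jj}=\prod_{p=1}^{4(j-1)}\sin\theta_{jp},$$ and $l_{11}=1$. Then the absolute value of the Jacobian determinant of the map from the angles $\{\theta_{jp}\}$ to the four real coordinates of each block $\rho_{jk}$, $1\le k<j\le N$, of $R$ is $$\prod_{j=2}^{N}\prod_{p=1}^{4j-4}\left(\sin\theta_{jp}\right)^{4N-p-3}.$$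
   Context: Empty products equal $1$. $L^*$ denotes the conjugate transpose. The hyperspherical parametrisations above are bijections from the open cube of angles onto the set of possible Cholesky factors of correlation matrices (each row of $L$ being a unit vector of real coordinates with positive last coordinate $l_{jj}$). *)

theory Defs
  imports Complex_Main "Jordan_Normal_Form.Determinant"
begin

definition partial_deriv :: "(('i \<Rightarrow> real) \<Rightarrow> real) \<Rightarrow> ('i \<Rightarrow> real) \<Rightarrow> 'i \<Rightarrow> real" where
  "partial_deriv f x i = (THE D. ((\<lambda>t. f (x(i := t))) has_real_derivative D) (at (x i)))"

definition jacobian_det ::
  "'i list \<Rightarrow> 'o list \<Rightarrow> (('i \<Rightarrow> real) \<Rightarrow> 'o \<Rightarrow> real) \<Rightarrow> ('i \<Rightarrow> real) \<Rightarrow> real" where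
  "jacobian_det ins outs F x =
     det (mat (length outs) (length ins)
          (\<lambda>(a, b). partial_deriv (\<lambda>y. F y (outs ! a)) x (ins ! b)))"

definition angles2 :: "nat \<Rightarrow> (nat \<times> nat) list" where
  "angles2 N = [(j, p). j \<leftarrow> [2..<Suc N], p \<leftarrow> [1..<2*j-1]]"

text \<open>Output coordinates (j,k,1) = Re rho_jk, (j,k,2) = Im rho_jk, 1 \<le> k < j \<le> N.\<close>
definition coords2 :: "nat \<Rightarrow> (nat \<times> nat \<times> nat) list" where
  "coords2 N = [(j, k, c). j \<leftarrow> [2..<Suc N], k \<leftarrow> [1..<j], c \<leftarrow> [1, 2]]"

text \<open>Cholesky factor L (1-indexed entries l_jk).\<close>
definition L2 :: "(nat \<times> nat \<Rightarrow> real) \<Rightarrow> nat \<Rightarrow> nat \<Rightarrow> complex" where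
  "L2 \<theta> j k =
     (if j = 1 \<and> k = 1 then 1
      else if k = j then complex_of_real (\<Prod>p\<in>{1..2*j-2}. sin (\<theta> (j, p)))
      else if 1 \<le> k \<and> k < j then
        (complex_of_real (cos (\<theta> (j, 2*k-1)))
          + \<i> * complex_of_real (cos (\<theta> (j, 2*k)) * sin (\<theta> (j, 2*k-1))))
        * complex_of_real (\<Prod>p\<in>{1..2*k-2}. sin (\<theta> (j, p)))
      else 0)"

definition R2 :: "nat \<Rightarrow> (nat \<times> nat \<Rightarrow> real) \<Rightarrow> nat \<Rightarrow> nat \<Rightarrow> complex" where
  "R2 N \<theta> j k = (\<Sum>m\<in>{1..N}. L2 \<theta> j m * cnj (L2 \<theta> k m))"

definition map2 :: "nat \<Rightarrow> (nat \<times> nat \<Rightarrow> real) \<Rightarrow> nat \<times> nat \<times> nat \<Rightarrow> real" where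
  "map2 N \<theta> = (\<lambda>(j, k, c). if c = 1 then Re (R2 N \<theta> j k) else Im (R2 N \<theta> j k))"

definition angles4 :: "nat \<Rightarrow> (nat \<times> nat) list" where
  "angles4 N = [(j, p). j \<leftarrow> [2..<Suc N], p \<leftarrow> [1..<4*j-3]]"

text \<open>Output coordinates (j,k,s), s = 1..4: Re z, Im z, Re w, Im w of block rho_jk.\<close>
definition coords4 :: "nat \<Rightarrow> (nat \<times> nat \<times> nat) list" where
  "coords4 N = [(j, k, s). j \<leftarrow> [2..<Suc N], k \<leftarrow> [1..<j], s \<leftarrow> [1..<5]]"

definition lq :: "(nat \<times> nat \<Rightarrow> real) \<Rightarrow> nat \<Rightarrow> nat \<Rightarrow> nat \<Rightarrow> real" where
  "lq \<theta> j k s = cos (\<theta> (j, 4*(k-1)+s))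
      * (\<Prod>m\<in>{1..s-1}. sin (\<theta> (j, 4*(k-1)+m)))
      * (\<Prod>p\<in>{1..4*(k-1)}. sin (\<theta> (j, p)))"

text \<open>Block parameters (z,w) of block (j,k) of L (1-indexed blocks).\<close>
definition Lblock4 :: "(nat \<times> nat \<Rightarrow> real) \<Rightarrow> nat \<Rightarrow> nat \<Rightarrow> complex \<times> complex" where
  "Lblock4 \<theta> j k =
     (if j = 1 \<and> k = 1 then (1, 0)
      else if k = j then (complex_of_real (\<Prod>p\<in>{1..4*(j-1)}. sin (\<theta> (j, p))), 0)
      else if 1 \<le> k \<and> k < j then
        (Complex (lq \<theta> j k 1) (lq \<theta> j k 2), Complex (lq \<theta> j k 3) (lq \<theta> j k 4))
      else (0, 0))"

definition qblock :: "complex \<times> complex \<Rightarrow> nat \<Rightarrow> nat \<Rightarrow> complex" where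
  "qblock zw r s = (let (z, w) = zw in
     if r = 0 then (if s = 0 then z else w) else (if s = 0 then - cnj w else cnj z))"

text \<open>The 2N x 2N complex matrix L, 0-indexed: entry (a,b) lies in block
(a div 2 + 1, b div 2 + 1) at position (a mod 2, b mod 2).\<close>
definition L4 :: "(nat \<times> nat \<Rightarrow> real) \<Rightarrow> nat \<Rightarrow> nat \<Rightarrow> complex" where
  "L4 \<theta> a b = qblock (Lblock4 \<theta> (a div 2 + 1) (b div 2 + 1)) (a mod 2) (b mod 2)"

definition R4 :: "nat \<Rightarrow> (nat \<times> nat \<Rightarrow> real) \<Rightarrow> nat \<Rightarrow> nat \<Rightarrow> complex" where
  "R4 N \<theta> a b = (\<Sum>c<2*N. L4 \<theta> a c * cnj (L4 \<theta> b c))"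

text \<open>Four real coordinates of block rho_jk: z = R(2j-2,2k-2), w = R(2j-2,2k-1) (0-indexed).\<close>
definition map4 :: "nat \<Rightarrow> (nat \<times> nat \<Rightarrow> real) \<Rightarrow> nat \<times> nat \<times> nat \<Rightarrow> real" where
  "map4 N \<theta> = (\<lambda>(j, k, s).
     if s = 1 then Re (R4 N \<theta> (2*j-2) (2*k-2))
     else if s = 2 then Im (R4 N \<theta> (2*j-2) (2*k-2))
     else if s = 3 then Re (R4 N \<theta> (2*j-2) (2*k-1))
     else Im (R4 N \<theta> (2*j-2) (2*k-1)))"

end

theory Submission
  imports Defs "HOL-Library.Product_Lexorder"
begin

text \<open>Let b = beta be the number of real components of an entry, order the angles theta (j, p)
lexicographically and pair the c-th real component of rho_jk with the pivot angle
(j, b(k-1)+c). Since rho_jk = (sum over m < k of l_jm l_km^*) + l_jk l_kk, where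
l_kk = prod (p <= b(k-1)) sin theta_kp and the c-th component of l_jk is the hyperspherical
coordinate cos theta_jq prod (p < q) sin theta_jp with q = b(k-1)+c, each coordinate depends
only on the angles up to its pivot. Hence the Jacobian matrix is triangular with diagonal
entries -(prod (p <= q) sin theta_jp)(prod (p <= b(k-1)) sin theta_kp), and counting how
often each sin theta_jp occurs gives the exponent b(N-1)+1-p.\<close>

section \<open>Triangular Jacobian matrices\<close>

definition depends_only_on :: "(('i \<Rightarrow> real) \<Rightarrow> 'a) \<Rightarrow> 'i set \<Rightarrow> bool" where
  "depends_only_on f S \<longleftrightarrow> (\<forall>x y. (\<forall>i\<in>S. x i = y i) \<longrightarrow> f x = f y)"

lemma depends_only_onI:
  "(\<And>x y. (\<And>i. i \<in> S \<Longrightarrow> x i = y i) \<Longrightarrow> f x = f y) \<Longrightarrow> depends_only_on f S"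
  unfolding depends_only_on_def by blast

lemma depends_only_onD:
  "depends_only_on f S \<Longrightarrow> (\<And>i. i \<in> S \<Longrightarrow> x i = y i) \<Longrightarrow> f x = f y"
  unfolding depends_only_on_def by blast

lemma depends_only_on_mono:
  "depends_only_on f S \<Longrightarrow> S \<subseteq> T \<Longrightarrow> depends_only_on f T"
  unfolding depends_only_on_def by blast

lemma partial_deriv_eqI:
  assumes "((\<lambda>t. f (x(i := t))) has_real_derivative D) (at (x i))"
  shows "partial_deriv f x i = D"
  unfolding partial_deriv_def using assms DERIV_unique by blast

lemma partial_deriv_eq_0_if_independent:
  assumes "depends_only_on f S" "i \<notin> S"
  shows "partial_deriv f x i = 0"
proof (rule partial_deriv_eqI)
  have "f (x(i := t)) = f x" for t
    using assms by (intro depends_only_onD[OF assms(1)]) auto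
  then show "((\<lambda>t. f (x(i := t))) has_real_derivative 0) (at (x i))"
    by simp
qed

lemma jacobian_det_lower_triangular:
  fixes pivot :: "'o \<Rightarrow> 'i::linorder"
  assumes ins: "map pivot outs = ins" and sorted: "sorted_wrt (<) ins"
    and above: "\<And>u i. u \<in> set outs \<Longrightarrow> i \<in> set ins \<Longrightarrow> pivot u < i \<Longrightarrow>
                   partial_deriv (\<lambda>y. F y u) x i = 0"
  shows "jacobian_det ins outs F x = (\<Prod>u\<leftarrow>outs. partial_deriv (\<lambda>y. F y u) x (pivot u))"
proof -
  let ?n = "length outs"
  let ?J = "mat ?n (length ins) (\<lambda>(a, b). partial_deriv (\<lambda>y. F y (outs ! a)) x (ins ! b))"
  have len: "length ins = ?n" and nth: "\<And>a. a < ?n \<Longrightarrow> ins ! a = pivot (outs ! a)"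
    using ins by auto
  have "det ?J = prod_list (diag_mat ?J)"
  proof (rule det_lower_triangular)
    fix a b assume "a < b" "b < dim_row ?J"
    with sorted len nth have "pivot (outs ! a) < ins ! b"
      by (metis dim_row_mat(1) order.strict_trans sorted_wrt_nth_less)
    with above \<open>a < b\<close> \<open>b < dim_row ?J\<close> len show "?J $$ (a, b) = 0"
      by simp
  qed (use len in simp)
  also have "\<dots> = (\<Prod>a = 0..<?n. partial_deriv (\<lambda>y. F y (outs ! a)) x (pivot (outs ! a)))"
    unfolding prod_list_diag_prod using len nth by (intro prod.cong) auto
  also have "\<dots> = (\<Prod>u\<leftarrow>outs. partial_deriv (\<lambda>y. F y u) x (pivot u))"
    by (simp add: prod.list_conv_set_nth)
  finally show ?thesis unfolding jacobian_det_def .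
qed

section \<open>Index lists and product identities\<close>

definition angle_index :: "nat \<Rightarrow> nat \<Rightarrow> (nat \<times> nat) list" where
  "angle_index b N = [(j, p). j \<leftarrow> [2..<Suc N], p \<leftarrow> [1..<b*(j-1)+1]]"

definition coord_index :: "nat \<Rightarrow> nat \<Rightarrow> (nat \<times> nat \<times> nat) list" where
  "coord_index b N = [(j, k, c). j \<leftarrow> [2..<Suc N], k \<leftarrow> [1..<j], c \<leftarrow> [1..<b+1]]"

definition pivot_angle :: "nat \<Rightarrow> nat \<times> nat \<times> nat \<Rightarrow> nat \<times> nat" where
  "pivot_angle b = (\<lambda>(j, k, c). (j, b*(k-1)+c))"

lemma angles2_eq_angle_index: "angles2 N = angle_index 2 N"
  unfolding angles2_def angle_index_def
proof (rule arg_cong[where f=concat], rule map_cong[OF refl])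
  fix j assume "j \<in> set [2..<Suc N]"
  then have "2*j-1 = 2*(j-1)+1" by auto
  then show "map (Pair j) [1..<2*j-1] = map (Pair j) [1..<2*(j-1)+1]" by (simp only:)
qed

lemma angles4_eq_angle_index: "angles4 N = angle_index 4 N"
  unfolding angles4_def angle_index_def
proof (rule arg_cong[where f=concat], rule map_cong[OF refl])
  fix j assume "j \<in> set [2..<Suc N]"
  then have "4*j-3 = 4*(j-1)+1" by auto
  then show "map (Pair j) [1..<4*j-3] = map (Pair j) [1..<4*(j-1)+1]" by (simp only:)
qed

lemma coords2_eq_coord_index: "coords2 N = coord_index 2 N"
proof -
  have "[1..<2+1] = [1::nat, 2]" by (simp add: upt_rec)
  then show ?thesis unfolding coords2_def coord_index_def by (simp only:)
qed

lemma coords4_eq_coord_index: "coords4 N = coord_index 4 N"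
  unfolding coords4_def coord_index_def by (simp only: numeral_plus_one semiring_norm)

lemma set_angle_index: "set (angle_index b N) = {(j, p). 2 \<le> j \<and> j \<le> N \<and> 1 \<le> p \<and> p \<le> b*(j-1)}"
  unfolding angle_index_def by (auto simp: image_iff simp del: upt_Suc)

lemma set_coord_index:
  "set (coord_index b N) = {(j, k, c). 2 \<le> j \<and> j \<le> N \<and> 1 \<le> k \<and> k < j \<and> 1 \<le> c \<and> c \<le> b}"
  unfolding coord_index_def by (auto simp: image_iff simp del: upt_Suc)

lemma sorted_angle_index: "sorted_wrt (<) (angle_index b N)"
proof (induction N)
  case (Suc N)
  show ?case
  proof (cases "N = 0")
    case False
    then have "[2..<Suc (Suc N)] = [2..<Suc N] @ [Suc N]"
      by (intro upt_Suc_append) simp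
    then have "angle_index b (Suc N) = angle_index b N @ map (Pair (Suc N)) [1..<b*N+1]"
      unfolding angle_index_def by (simp del: upt_Suc)
    moreover have "sorted_wrt (<) (map (Pair (Suc N)) [1..<b*N+1])"
      by (simp add: sorted_wrt_map del: upt_Suc)
    ultimately show ?thesis
      using Suc.IH by (auto simp: sorted_wrt_append set_angle_index simp del: upt_Suc)
  qed (simp add: angle_index_def)
qed (simp add: angle_index_def)

lemma map_plus_upt: "map (\<lambda>c. a + c) [m..<n] = [a+m..<a+n]"
  by (induction n) auto

lemma concat_pivot_blocks:
  "concat (map (\<lambda>k. map (\<lambda>c. b*(k-1)+c) [1..<b+1]) [1..<Suc n]) = [1..<b*n+1]"
proof (induction n)
  case (Suc n)
  have "[1..<Suc (Suc n)] = [1..<Suc n] @ [Suc n]"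
    by (intro upt_Suc_append) simp
  then have "concat (map (\<lambda>k. map (\<lambda>c. b*(k-1)+c) [1..<b+1]) [1..<Suc (Suc n)])
      = [1..<b*n+1] @ map (\<lambda>c. b*n+c) [1..<b+1]"
    using Suc.IH by (simp del: upt_Suc)
  also have "\<dots> = [1..<b*n+1] @ [b*n+1..<b*n+1+b]"
    by (simp add: map_plus_upt del: upt_Suc)
  also have "\<dots> = [1..<b * Suc n + 1]"
    using upt_add_eq_append[of 1 "b*n+1" b] by (simp add: ac_simps del: upt_Suc)
  finally show ?case .
qed simp

lemma map_pivot_coord_index: "map (pivot_angle b) (coord_index b N) = angle_index b N"
  unfolding coord_index_def angle_index_def map_concat map_map
proof (rule arg_cong[where f=concat], rule map_cong[OF refl])
  fix j assume "j \<in> set [2..<Suc N]"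
  then obtain n where "j = Suc n"
    using not0_implies_Suc by fastforce
  then show "(map (pivot_angle b) \<circ> (\<lambda>j. concat (map (\<lambda>k. map (\<lambda>c. (j, k, c)) [1..<b+1]) [1..<j]))) j
      = map (Pair j) [1..<b*(j-1)+1]"
    using arg_cong[OF concat_pivot_blocks[of b n], of "map (Pair j)"]
    by (simp add: pivot_angle_def map_concat comp_def del: upt_Suc)
qed

lemma prod_list_concat: "prod_list (concat xss) = (\<Prod>xs\<leftarrow>xss. prod_list xs)"
  by (induction xss) auto

lemma prod_list_upt: "(\<Prod>i\<leftarrow>[m..<n]. f i) = (\<Prod>i\<in>{m..<n}. f i)"
  by (metis distinct_upt prod.distinct_set_conv_list set_upt)

lemma prod_list_coord_index:
  "(\<Prod>u\<leftarrow>coord_index b N. f u) = (\<Prod>j\<in>{2..N}. \<Prod>k\<in>{1..<j}. \<Prod>c\<in>{1..b}. f (j, k, c))"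
  unfolding coord_index_def prod_list_concat map_concat map_map comp_def prod_list_upt
  by (simp add: atLeastLessThanSuc_atLeastAtMost del: upt_Suc)

lemma prod_atLeastLessThan_add:
  fixes f :: "nat \<Rightarrow> 'a::comm_monoid_mult"
  assumes "1 \<le> s"
  shows "(\<Prod>p\<in>{1..<a+s}. f p) = (\<Prod>p\<in>{1..a}. f p) * (\<Prod>m\<in>{1..<s}. f (a+m))"
  using assms
proof (induction s rule: dec_induct)
  case (step s)
  then show ?case by (simp add: prod.atLeastLessThan_Suc ac_simps)
qed (simp add: atLeastLessThanSuc_atLeastAtMost)

lemma prod_blocks_reindex:
  fixes f :: "nat \<Rightarrow> 'a::comm_monoid_mult"
  shows "(\<Prod>k\<in>{1..n}. \<Prod>c\<in>{1..b}. f (b*(k-1)+c)) = (\<Prod>q\<in>{1..b*n}. f q)"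
proof (induction n)
  case (Suc n)
  have "(\<Prod>c\<in>{1..b}. f (b*n+c)) = (\<Prod>q\<in>{b*n+1..b*n+b}. f q)"
    using prod.shift_bounds_cl_nat_ivl[of f 1 "b*n" b] by (simp add: ac_simps)
  moreover have "(\<Prod>q\<in>{1..b*n+b}. f q) = (\<Prod>q\<in>{1..b*n}. f q) * (\<Prod>q\<in>{b*n+1..b*n+b}. f q)"
    by (rule prod.ub_add_nat) simp
  ultimately show ?case
    using Suc.IH by (simp add: ac_simps)
qed simp

lemma prod_prefix_prods:
  fixes f :: "nat \<Rightarrow> 'a::comm_monoid_mult"
  shows "(\<Prod>q\<in>{1..n}. \<Prod>p\<in>{1..q}. f p) = (\<Prod>p\<in>{1..n}. f p ^ (n+1-p))"
proof (induction n)
  case (Suc n)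
  have "(\<Prod>p\<in>{1..n}. f p ^ (Suc n+1-p)) = (\<Prod>p\<in>{1..n}. f p ^ (n+1-p)) * (\<Prod>p\<in>{1..n}. f p)"
    by (simp add: Suc_diff_le prod.distrib[symmetric] ac_simps)
  then show ?case
    using Suc.IH by (simp add: ac_simps)
qed simp

lemma prod_lower_triangle:
  fixes f :: "nat \<Rightarrow> 'a::comm_monoid_mult"
  shows "(\<Prod>j\<in>{2..N}. \<Prod>k\<in>{1..<j}. f k) = (\<Prod>k\<in>{1..N}. f k ^ (N-k))"
proof (induction N)
  case (Suc N)
  have "(\<Prod>k\<in>{1..N}. f k ^ (Suc N-k)) = (\<Prod>k\<in>{1..N}. f k ^ (N-k)) * (\<Prod>k\<in>{1..N}. f k)"
    by (simp add: Suc_diff_le prod.distrib[symmetric] ac_simps)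
  moreover have "{1..<Suc N} = {1..N}" by auto
  ultimately show ?case
    using Suc.IH by (cases "N = 0") (simp_all add: ac_simps)
qed simp

lemma prod_pivot_diagonal:
  fixes s :: "nat \<Rightarrow> nat \<Rightarrow> 'a::comm_semiring_1"
  shows "(\<Prod>j\<in>{2..N}. \<Prod>k\<in>{1..<j}. \<Prod>c\<in>{1..b}.
            (\<Prod>p\<in>{1..b*(k-1)+c}. s j p) * (\<Prod>p\<in>{1..b*(k-1)}. s k p))
       = (\<Prod>j\<in>{2..N}. \<Prod>p\<in>{1..b*(j-1)}. s j p ^ (b*(N-1)+1-p))"
proof -
  let ?P = "\<lambda>k. \<Prod>p\<in>{1..b*(k-1)}. s k p"
  have row: "(\<Prod>k\<in>{1..<j}. \<Prod>c\<in>{1..b}. \<Prod>p\<in>{1..b*(k-1)+c}. s j p)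
      = (\<Prod>p\<in>{1..b*(j-1)}. s j p ^ (b*(j-1)+1-p))" if "1 \<le> j" for j
  proof -
    have "{1..<j} = {1..j-1}" using that by auto
    then show ?thesis
      using prod_blocks_reindex[of "\<lambda>q. \<Prod>p\<in>{1..q}. s j p" b "j-1"]
        prod_prefix_prods[of "s j" "b*(j-1)"] by simp
  qed
  have rows: "(\<Prod>j\<in>{2..N}. \<Prod>k\<in>{1..<j}. \<Prod>c\<in>{1..b}. \<Prod>p\<in>{1..b*(k-1)+c}. s j p)
      = (\<Prod>j\<in>{2..N}. \<Prod>p\<in>{1..b*(j-1)}. s j p ^ (b*(j-1)+1-p))"
    by (rule prod.cong[OF refl], rule row) simp
  have column: "(\<Prod>j\<in>{2..N}. \<Prod>k\<in>{1..<j}. ?P k ^ b) = (\<Prod>j\<in>{2..N}. ?P j ^ (b*(N-j)))"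
  proof (cases "N = 0")
    case False
    then have "(\<Prod>k\<in>{1..N}. (?P k ^ b) ^ (N-k)) = (\<Prod>k\<in>{2..N}. (?P k ^ b) ^ (N-k))"
      by (simp add: prod.atLeast_Suc_atMost numeral_2_eq_2)
    then show ?thesis
      using prod_lower_triangle[of "\<lambda>k. ?P k ^ b" N] by (simp add: power_mult)
  qed simp
  have "(\<Prod>j\<in>{2..N}. \<Prod>k\<in>{1..<j}. \<Prod>c\<in>{1..b}.
            (\<Prod>p\<in>{1..b*(k-1)+c}. s j p) * ?P k)
      = (\<Prod>j\<in>{2..N}. \<Prod>k\<in>{1..<j}. \<Prod>c\<in>{1..b}. \<Prod>p\<in>{1..b*(k-1)+c}. s j p)
        * (\<Prod>j\<in>{2..N}. \<Prod>k\<in>{1..<j}. ?P k ^ b)"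
    by (simp add: prod.distrib)
  also have "\<dots> = (\<Prod>j\<in>{2..N}. (\<Prod>p\<in>{1..b*(j-1)}. s j p ^ (b*(j-1)+1-p)) * ?P j ^ (b*(N-j)))"
    unfolding rows column by (rule prod.distrib[symmetric])
  also have "\<dots> = (\<Prod>j\<in>{2..N}. \<Prod>p\<in>{1..b*(j-1)}. s j p ^ (b*(N-1)+1-p))"
  proof (intro prod.cong refl)
    fix j assume j: "j \<in> {2..N}"
    have "b*(j-1) + b*(N-j) = b*(N-1)"
      using j by (simp add: add_mult_distrib2[symmetric])
    then have exponents: "b*(j-1)+1-p + b*(N-j) = b*(N-1)+1-p" if "p \<le> b*(j-1)" for p
      using that by linarith
    have "(\<Prod>p\<in>{1..b*(j-1)}. s j p ^ (b*(j-1)+1-p)) * ?P j ^ (b*(N-j))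
        = (\<Prod>p\<in>{1..b*(j-1)}. s j p ^ (b*(j-1)+1-p) * s j p ^ (b*(N-j)))"
      by (simp add: prod.distrib prod_power_distrib)
    also have "\<dots> = (\<Prod>p\<in>{1..b*(j-1)}. s j p ^ (b*(N-1)+1-p))"
      using exponents by (intro prod.cong refl) (simp add: power_add[symmetric])
    finally show "(\<Prod>p\<in>{1..b*(j-1)}. s j p ^ (b*(j-1)+1-p)) * ?P j ^ (b*(N-j))
        = (\<Prod>p\<in>{1..b*(j-1)}. s j p ^ (b*(N-1)+1-p))" .
  qed
  finally show ?thesis .
qed

section \<open>Cholesky factors with hyperspherical rows\<close>

definition hypersph_coord :: "(nat \<Rightarrow> real) \<Rightarrow> nat \<Rightarrow> real" where
  "hypersph_coord \<phi> q = cos (\<phi> q) * (\<Prod>p\<in>{1..<q}. sin (\<phi> p))"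

lemma hypersph_coord_block:
  assumes "1 \<le> s"
  shows "hypersph_coord \<phi> (a+s)
     = cos (\<phi> (a+s)) * (\<Prod>m\<in>{1..<s}. sin (\<phi> (a+m))) * (\<Prod>p\<in>{1..a}. sin (\<phi> p))"
  unfolding hypersph_coord_def prod_atLeastLessThan_add[OF assms] by (simp only: mult_ac)

locale cholesky_angle_param =
  fixes b N :: nat and F H :: "(nat \<times> nat \<Rightarrow> real) \<Rightarrow> nat \<times> nat \<times> nat \<Rightarrow> real"
  assumes coordinate_split: "\<And>\<theta> j k c. 2 \<le> j \<Longrightarrow> j \<le> N \<Longrightarrow> 1 \<le> k \<Longrightarrow> k < j \<Longrightarrow> 1 \<le> c \<Longrightarrow> c \<le> b \<Longrightarrow>
      F \<theta> (j, k, c) = H \<theta> (j, k, c)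
        + hypersph_coord (\<lambda>p. \<theta> (j, p)) (b*(k-1)+c) * (\<Prod>p\<in>{1..b*(k-1)}. sin (\<theta> (k, p)))"
    and head_depends: "\<And>j k c. 1 \<le> k \<Longrightarrow> k < j \<Longrightarrow> depends_only_on (\<lambda>\<theta>. H \<theta> (j, k, c)) {..(j, b*(k-1))}"
begin

lemma coordinate_depends_below_pivot:
  assumes "2 \<le> j" "j \<le> N" "1 \<le> k" "k < j" "1 \<le> c" "c \<le> b"
  shows "depends_only_on (\<lambda>\<theta>. F \<theta> (j, k, c)) {..(j, b*(k-1)+c)}"
proof (rule depends_only_onI)
  fix x y :: "nat \<times> nat \<Rightarrow> real"
  assume agree: "\<And>i. i \<in> {..(j, b*(k-1)+c)} \<Longrightarrow> x i = y i"
  have "H x (j, k, c) = H y (j, k, c)"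
    using head_depends[OF assms(3,4)] agree by (rule depends_only_onD) auto
  moreover have "hypersph_coord (\<lambda>p. x (j, p)) (b*(k-1)+c) = hypersph_coord (\<lambda>p. y (j, p)) (b*(k-1)+c)"
    unfolding hypersph_coord_def using agree by (auto intro!: prod.cong)
  moreover have "(\<Prod>p\<in>{1..b*(k-1)}. sin (x (k, p))) = (\<Prod>p\<in>{1..b*(k-1)}. sin (y (k, p)))"
    using agree \<open>k < j\<close> by (auto intro!: prod.cong)
  ultimately show "F x (j, k, c) = F y (j, k, c)"
    using coordinate_split assms by simp
qed

lemma partial_deriv_pivot:
  assumes "2 \<le> j" "j \<le> N" "1 \<le> k" "k < j" "1 \<le> c" "c \<le> b"
  shows "partial_deriv (\<lambda>\<theta>. F \<theta> (j, k, c)) \<theta> (j, b*(k-1)+c)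
    = - ((\<Prod>p\<in>{1..b*(k-1)+c}. sin (\<theta> (j, p))) * (\<Prod>p\<in>{1..b*(k-1)}. sin (\<theta> (k, p))))"
proof (rule partial_deriv_eqI)
  define q where "q = b*(k-1)+c"
  define K where "K = (\<Prod>p\<in>{1..<q}. sin (\<theta> (j, p))) * (\<Prod>p\<in>{1..b*(k-1)}. sin (\<theta> (k, p)))"
  have "F (\<theta>((j, q) := t)) (j, k, c) = H \<theta> (j, k, c) + cos t * K" for t
  proof -
    have "H (\<theta>((j, q) := t)) (j, k, c) = H \<theta> (j, k, c)"
      using head_depends[OF assms(3,4)] by (rule depends_only_onD) (use assms in \<open>auto simp: q_def\<close>)
    then show ?thesis
      using coordinate_split[OF assms] \<open>k < j\<close>
      by (simp add: q_def K_def hypersph_coord_def)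
  qed
  then have "((\<lambda>t. F (\<theta>((j, q) := t)) (j, k, c)) has_real_derivative - sin (\<theta> (j, q)) * K) (at (\<theta> (j, q)))"
    by (auto intro!: derivative_eq_intros)
  moreover have "(\<Prod>p\<in>{1..q}. sin (\<theta> (j, p))) = (\<Prod>p\<in>{1..<q}. sin (\<theta> (j, p))) * sin (\<theta> (j, q))"
    using assms by (simp add: q_def prod.atLeastLessThan_Suc flip: atLeastLessThanSuc_atLeastAtMost)
  ultimately show "((\<lambda>t. F (\<theta>((j, b*(k-1)+c) := t)) (j, k, c)) has_real_derivative
      - ((\<Prod>p\<in>{1..b*(k-1)+c}. sin (\<theta> (j, p))) * (\<Prod>p\<in>{1..b*(k-1)}. sin (\<theta> (k, p)))))
      (at (\<theta> (j, b*(k-1)+c)))"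
    by (simp add: q_def K_def mult_ac)
qed

lemma jacobian_det_eq:
  "jacobian_det (angle_index b N) (coord_index b N) F \<theta>
    = (\<Prod>j\<in>{2..N}. \<Prod>k\<in>{1..<j}. \<Prod>c\<in>{1..b}.
         - ((\<Prod>p\<in>{1..b*(k-1)+c}. sin (\<theta> (j, p))) * (\<Prod>p\<in>{1..b*(k-1)}. sin (\<theta> (k, p)))))"
proof -
  have "jacobian_det (angle_index b N) (coord_index b N) F \<theta>
      = (\<Prod>u\<leftarrow>coord_index b N. partial_deriv (\<lambda>\<theta>. F \<theta> u) \<theta> (pivot_angle b u))"
  proof (rule jacobian_det_lower_triangular[OF map_pivot_coord_index sorted_angle_index])
    fix u i assume "u \<in> set (coord_index b N)" "pivot_angle b u < i"
    then show "partial_deriv (\<lambda>\<theta>. F \<theta> u) \<theta> i = 0"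
      by (auto simp: set_coord_index pivot_angle_def not_le
          intro!: partial_deriv_eq_0_if_independent coordinate_depends_below_pivot)
  qed
  also have "\<dots> = (\<Prod>j\<in>{2..N}. \<Prod>k\<in>{1..<j}. \<Prod>c\<in>{1..b}.
         - ((\<Prod>p\<in>{1..b*(k-1)+c}. sin (\<theta> (j, p))) * (\<Prod>p\<in>{1..b*(k-1)}. sin (\<theta> (k, p)))))"
    unfolding prod_list_coord_index
  proof (intro prod.cong refl)
    fix j k c assume jkc: "j \<in> {2..N}" "k \<in> {1..<j}" "c \<in> {1..b}"
    show "partial_deriv (\<lambda>\<theta>. F \<theta> (j, k, c)) \<theta> (pivot_angle b (j, k, c))
        = - ((\<Prod>p\<in>{1..b*(k-1)+c}. sin (\<theta> (j, p))) * (\<Prod>p\<in>{1..b*(k-1)}. sin (\<theta> (k, p))))"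
      unfolding pivot_angle_def case_prod_conv by (rule partial_deriv_pivot) (use jkc in auto)
  qed
  finally show ?thesis .
qed

lemma abs_jacobian_det:
  assumes sin_pos: "\<And>j p. 2 \<le> j \<Longrightarrow> j \<le> N \<Longrightarrow> 1 \<le> p \<Longrightarrow> p \<le> b*(j-1) \<Longrightarrow> 0 < sin (\<theta> (j, p))"
  shows "\<bar>jacobian_det (angle_index b N) (coord_index b N) F \<theta>\<bar>
    = (\<Prod>j\<in>{2..N}. \<Prod>p\<in>{1..b*(j-1)}. sin (\<theta> (j, p)) ^ (b*(N-1)+1-p))"
proof -
  have nonneg: "0 \<le> (\<Prod>p\<in>{1..m}. sin (\<theta> (i, p)))" if "i \<le> N" "m \<le> b*(i-1)" for i m
  proof (rule prod_nonneg)
    fix p assume "p \<in> {1..m}"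
    with that have "2 \<le> i" by (cases "i \<le> 1") auto
    with that \<open>p \<in> {1..m}\<close> show "0 \<le> sin (\<theta> (i, p))"
      using sin_pos[of i p] by auto
  qed
  have "\<bar>jacobian_det (angle_index b N) (coord_index b N) F \<theta>\<bar>
      = (\<Prod>j\<in>{2..N}. \<Prod>k\<in>{1..<j}. \<Prod>c\<in>{1..b}.
           (\<Prod>p\<in>{1..b*(k-1)+c}. sin (\<theta> (j, p))) * (\<Prod>p\<in>{1..b*(k-1)}. sin (\<theta> (k, p))))"
    unfolding jacobian_det_eq abs_prod
  proof (intro prod.cong refl)
    fix j k c assume jkc: "j \<in> {2..N}" "k \<in> {1..<j}" "c \<in> {1..b}"
    have "b*(k-1)+c \<le> b*(k-1)+b" using jkc by simp
    also have "\<dots> = b*k" using jkc by (cases k) auto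
    also have "\<dots> \<le> b*(j-1)" using jkc by (intro mult_le_mono2) auto
    finally have "b*(k-1)+c \<le> b*(j-1)" .
    with jkc show "\<bar>- ((\<Prod>p\<in>{1..b*(k-1)+c}. sin (\<theta> (j, p))) * (\<Prod>p\<in>{1..b*(k-1)}. sin (\<theta> (k, p))))\<bar>
        = (\<Prod>p\<in>{1..b*(k-1)+c}. sin (\<theta> (j, p))) * (\<Prod>p\<in>{1..b*(k-1)}. sin (\<theta> (k, p)))"
      using nonneg[of j "b*(k-1)+c"] nonneg[of k "b*(k-1)"] by simp
  qed
  also have "\<dots> = (\<Prod>j\<in>{2..N}. \<Prod>p\<in>{1..b*(j-1)}. sin (\<theta> (j, p)) ^ (b*(N-1)+1-p))"
    by (rule prod_pivot_diagonal)
  finally show ?thesis .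
qed

end

lemma depends_only_on_row_sum:
  fixes G :: "(nat \<times> nat \<Rightarrow> real) \<Rightarrow> nat \<Rightarrow> nat \<Rightarrow> 'a"
  assumes G: "\<And>j m. depends_only_on (\<lambda>\<theta>. G \<theta> j m) {..(j, b*m)}" and "k < j"
  shows "depends_only_on (\<lambda>\<theta>. \<Sum>m\<in>{1..<k}. f (G \<theta> j m) (G \<theta> k m)) {..(j, b*(k-1))}"
proof (rule depends_only_onI)
  fix x y :: "nat \<times> nat \<Rightarrow> real"
  assume agree: "\<And>i. i \<in> {..(j, b*(k-1))} \<Longrightarrow> x i = y i"
  have "G x j m = G y j m \<and> G x k m = G y k m" if "m \<in> {1..<k}" for m
  proof
    have "b*m \<le> b*(k-1)" using that by (intro mult_le_mono2) auto
    then have "{..(j, b*m)} \<subseteq> {..(j, b*(k-1))}" by (simp add: atMost_subset_iff)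
    with G have "depends_only_on (\<lambda>\<theta>. G \<theta> j m) {..(j, b*(k-1))}" by (rule depends_only_on_mono)
    then show "G x j m = G y j m" using agree by (rule depends_only_onD)
    have "{..(k, b*m)} \<subseteq> {..(j, b*(k-1))}" using \<open>k < j\<close> by (simp add: atMost_subset_iff)
    with G have "depends_only_on (\<lambda>\<theta>. G \<theta> k m) {..(j, b*(k-1))}" by (rule depends_only_on_mono)
    then show "G x k m = G y k m" using agree by (rule depends_only_onD)
  qed
  then show "(\<Sum>m\<in>{1..<k}. f (G x j m) (G x k m)) = (\<Sum>m\<in>{1..<k}. f (G y j m) (G y k m))"
    by (intro sum.cong) auto
qed

section \<open>The complex case\<close>

lemma L2_diag: "1 \<le> k \<Longrightarrow> L2 \<theta> k k = of_real (\<Prod>p\<in>{1..2*(k-1)}. sin (\<theta> (k, p)))"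
  unfolding L2_def by (simp add: right_diff_distrib')

lemma L2_above: "j < k \<Longrightarrow> L2 \<theta> j k = 0"
  unfolding L2_def by simp

lemma L2_below:
  assumes "1 \<le> k" "k < j"
  shows "Re (L2 \<theta> j k) = hypersph_coord (\<lambda>p. \<theta> (j, p)) (2*(k-1)+1)"
    and "Im (L2 \<theta> j k) = hypersph_coord (\<lambda>p. \<theta> (j, p)) (2*(k-1)+2)"
proof -
  have "2*k-1 = 2*(k-1)+1" "2*k = 2*(k-1)+2" "2*k-2 = 2*(k-1)" using assms by auto
  moreover have "hypersph_coord (\<lambda>p. \<theta> (j, p)) (2*(k-1)+1)
      = cos (\<theta> (j, 2*(k-1)+1)) * (\<Prod>p\<in>{1..2*(k-1)}. sin (\<theta> (j, p)))"
    using hypersph_coord_block[where s=1 and a="2*(k-1)"] by simp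
  moreover have "hypersph_coord (\<lambda>p. \<theta> (j, p)) (2*(k-1)+2)
      = cos (\<theta> (j, 2*(k-1)+2)) * sin (\<theta> (j, 2*(k-1)+1)) * (\<Prod>p\<in>{1..2*(k-1)}. sin (\<theta> (j, p)))"
    using hypersph_coord_block[where s=2 and a="2*(k-1)"] by (simp add: numeral_2_eq_2)
  ultimately show "Re (L2 \<theta> j k) = hypersph_coord (\<lambda>p. \<theta> (j, p)) (2*(k-1)+1)"
    and "Im (L2 \<theta> j k) = hypersph_coord (\<lambda>p. \<theta> (j, p)) (2*(k-1)+2)"
    using assms by (simp_all add: L2_def flip: of_real_prod)
qed

lemma L2_depends: "depends_only_on (\<lambda>\<theta>. L2 \<theta> j m) {..(j, 2*m)}"
proof (rule depends_only_onI)
  fix x y :: "nat \<times> nat \<Rightarrow> real"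
  assume "\<And>i. i \<in> {..(j, 2*m)} \<Longrightarrow> x i = y i"
  then have row: "x (j, p) = y (j, p)" if "p \<le> 2*m" for p
    using that by simp
  show "L2 x j m = L2 y j m"
    unfolding L2_def by (auto simp: row intro!: prod.cong)
qed

lemma R2_split:
  assumes "1 \<le> k" "k < j" "j \<le> N"
  shows "R2 N \<theta> j k = (\<Sum>m\<in>{1..<k}. L2 \<theta> j m * cnj (L2 \<theta> k m))
                       + L2 \<theta> j k * of_real (\<Prod>p\<in>{1..2*(k-1)}. sin (\<theta> (k, p)))"
proof -
  have "R2 N \<theta> j k = (\<Sum>m\<in>{1..k}. L2 \<theta> j m * cnj (L2 \<theta> k m))"
    unfolding R2_def using assms by (intro sum.mono_neutral_right) (auto simp: L2_above)
  also have "\<dots> = (\<Sum>m\<in>{1..<k}. L2 \<theta> j m * cnj (L2 \<theta> k m)) + L2 \<theta> j k * cnj (L2 \<theta> k k)"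
    using assms by (simp add: sum.atLeastLessThan_Suc flip: atLeastLessThanSuc_atLeastAtMost)
  finally show ?thesis
    using assms by (simp add: L2_diag)
qed

lemma cholesky_angle_param_map2:
  "cholesky_angle_param 2 N (map2 N)
     (\<lambda>\<theta> (j, k, c). \<Sum>m\<in>{1..<k}. (if c = 1 then Re else Im) (L2 \<theta> j m * cnj (L2 \<theta> k m)))"
proof
  fix \<theta> :: "nat \<times> nat \<Rightarrow> real" and j k c :: nat
  assume jkc: "2 \<le> j" "j \<le> N" "1 \<le> k" "k < j" "1 \<le> c" "c \<le> 2"
  then consider "c = 1" | "c = 2" by linarith
  then show "map2 N \<theta> (j, k, c) =
      (case (j, k, c) of (j, k, c) \<Rightarrow> \<Sum>m\<in>{1..<k}. (if c = 1 then Re else Im) (L2 \<theta> j m * cnj (L2 \<theta> k m)))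
      + hypersph_coord (\<lambda>p. \<theta> (j, p)) (2*(k-1)+c) * (\<Prod>p\<in>{1..2*(k-1)}. sin (\<theta> (k, p)))"
    by cases (use jkc in \<open>simp_all add: map2_def R2_split L2_below Re_sum Im_sum flip: of_real_prod\<close>)
next
  fix j k c :: nat
  assume "1 \<le> k" "k < j"
  then show "depends_only_on (\<lambda>\<theta>. case (j, k, c) of (j, k, c) \<Rightarrow>
      \<Sum>m\<in>{1..<k}. (if c = 1 then Re else Im) (L2 \<theta> j m * cnj (L2 \<theta> k m))) {..(j, 2*(k-1))}"
    using depends_only_on_row_sum[OF L2_depends, of k j "\<lambda>z w. (if c = 1 then Re else Im) (z * cnj w)"]
    by simp
qed

section \<open>The quaternion case\<close>

definition quat_coord :: "nat \<Rightarrow> complex \<times> complex \<Rightarrow> real" where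
  "quat_coord s zw = (if s = 1 then Re (fst zw) else if s = 2 then Im (fst zw)
                      else if s = 3 then Re (snd zw) else Im (snd zw))"

text \<open>The first block row of X Y^* for 2x2 blocks X, Y in the form of qblock.\<close>

definition qmult_adj :: "complex \<times> complex \<Rightarrow> complex \<times> complex \<Rightarrow> complex \<times> complex" where
  "qmult_adj x y = (fst x * cnj (fst y) + snd x * cnj (snd y), snd x * fst y - fst x * snd y)"

lemma quat_coord_qmult_adj_real:
  "quat_coord s (qmult_adj x (of_real r, 0)) = quat_coord s x * r"
  by (simp add: quat_coord_def qmult_adj_def)

lemma quat_coord_qmult_adj_zero: "quat_coord s (qmult_adj x (0, 0)) = 0"
  by (simp add: quat_coord_def qmult_adj_def)

lemma sum_lessThan_double:
  "(\<Sum>c<2*(N::nat). f c) = (\<Sum>m<N. f (2*m) + f (2*m+1))"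
  by (induction N) (simp_all add: add.assoc)

lemma L4_entries:
  "L4 \<theta> (2*i) (2*m) = fst (Lblock4 \<theta> (Suc i) (Suc m))"
  "L4 \<theta> (2*i) (Suc (2*m)) = snd (Lblock4 \<theta> (Suc i) (Suc m))"
  "L4 \<theta> (Suc (2*i)) (2*m) = - cnj (snd (Lblock4 \<theta> (Suc i) (Suc m)))"
  "L4 \<theta> (Suc (2*i)) (Suc (2*m)) = cnj (fst (Lblock4 \<theta> (Suc i) (Suc m)))"
  by (simp_all add: L4_def qblock_def split_beta)

lemma map4_eq_sum:
  assumes "1 \<le> j" "1 \<le> k"
  shows "map4 N \<theta> (j, k, s) = (\<Sum>m\<in>{1..N}. quat_coord s (qmult_adj (Lblock4 \<theta> j m) (Lblock4 \<theta> k m)))"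
proof -
  obtain i l where j: "j = Suc i" and k: "k = Suc l"
    using assms by (metis Suc_le_D One_nat_def)
  have "R4 N \<theta> (2*j-2) (2*k-2) = (\<Sum>m\<in>{1..N}. fst (qmult_adj (Lblock4 \<theta> j m) (Lblock4 \<theta> k m)))"
    and "R4 N \<theta> (2*j-2) (2*k-1) = (\<Sum>m\<in>{1..N}. snd (qmult_adj (Lblock4 \<theta> j m) (Lblock4 \<theta> k m)))"
    unfolding R4_def sum_lessThan_double j k
    by (simp_all add: L4_entries qmult_adj_def sum.atLeast1_atMost_eq)
  then show ?thesis
    by (simp add: map4_def quat_coord_def Re_sum Im_sum)
qed

lemma Lblock4_diag: "1 \<le> k \<Longrightarrow> Lblock4 \<theta> k k = (of_real (\<Prod>p\<in>{1..4*(k-1)}. sin (\<theta> (k, p))), 0)"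
  unfolding Lblock4_def by simp

lemma Lblock4_above: "j < k \<Longrightarrow> Lblock4 \<theta> j k = (0, 0)"
  unfolding Lblock4_def by simp

lemma lq_eq_hypersph_coord:
  assumes "1 \<le> s"
  shows "lq \<theta> j k s = hypersph_coord (\<lambda>p. \<theta> (j, p)) (4*(k-1)+s)"
proof -
  have "{1..s-1} = {1..<s}" using assms by auto
  then show ?thesis
    unfolding lq_def hypersph_coord_block[OF assms] by simp
qed

lemma quat_coord_Lblock4:
  assumes "1 \<le> k" "k < j" "1 \<le> s" "s \<le> 4"
  shows "quat_coord s (Lblock4 \<theta> j k) = hypersph_coord (\<lambda>p. \<theta> (j, p)) (4*(k-1)+s)"
proof -
  have "s = 1 \<or> s = 2 \<or> s = 3 \<or> s = 4" using assms by auto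
  then show ?thesis
    unfolding lq_eq_hypersph_coord[OF assms(3), symmetric]
    using assms by (auto simp: quat_coord_def Lblock4_def)
qed

lemma Lblock4_depends: "depends_only_on (\<lambda>\<theta>. Lblock4 \<theta> j m) {..(j, 4*m)}"
proof (rule depends_only_onI)
  fix x y :: "nat \<times> nat \<Rightarrow> real"
  assume "\<And>i. i \<in> {..(j, 4*m)} \<Longrightarrow> x i = y i"
  then have row: "x (j, p) = y (j, p)" if "p \<le> 4*m" for p
    using that by simp
  have lq: "lq x j m s = lq y j m s" if "1 \<le> m" "s \<le> 4" for s
  proof -
    have "(\<Prod>i\<in>{1..s-1}. sin (x (j, 4*(m-1)+i))) = (\<Prod>i\<in>{1..s-1}. sin (y (j, 4*(m-1)+i)))"
      using that by (intro prod.cong refl arg_cong[where f=sin] row) auto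
    moreover have "(\<Prod>p\<in>{1..4*(m-1)}. sin (x (j, p))) = (\<Prod>p\<in>{1..4*(m-1)}. sin (y (j, p)))"
      by (intro prod.cong refl arg_cong[where f=sin] row) auto
    moreover have "x (j, 4*(m-1)+s) = y (j, 4*(m-1)+s)"
      using that by (intro row) simp
    ultimately show ?thesis
      unfolding lq_def by simp
  qed
  show "Lblock4 x j m = Lblock4 y j m"
    unfolding Lblock4_def by (auto simp: row lq intro!: prod.cong)
qed

lemma map4_split:
  assumes "1 \<le> k" "k < j" "j \<le> N" "1 \<le> s" "s \<le> 4"
  shows "map4 N \<theta> (j, k, s) = (\<Sum>m\<in>{1..<k}. quat_coord s (qmult_adj (Lblock4 \<theta> j m) (Lblock4 \<theta> k m)))
           + hypersph_coord (\<lambda>p. \<theta> (j, p)) (4*(k-1)+s) * (\<Prod>p\<in>{1..4*(k-1)}. sin (\<theta> (k, p)))"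
proof -
  have "1 \<le> j" using assms by simp
  have "map4 N \<theta> (j, k, s) = (\<Sum>m\<in>{1..k}. quat_coord s (qmult_adj (Lblock4 \<theta> j m) (Lblock4 \<theta> k m)))"
    unfolding map4_eq_sum[OF \<open>1 \<le> j\<close> assms(1)] using assms
    by (intro sum.mono_neutral_right) (auto simp: Lblock4_above quat_coord_qmult_adj_zero)
  also have "\<dots> = (\<Sum>m\<in>{1..<k}. quat_coord s (qmult_adj (Lblock4 \<theta> j m) (Lblock4 \<theta> k m)))
      + quat_coord s (qmult_adj (Lblock4 \<theta> j k) (Lblock4 \<theta> k k))"
    using assms by (simp add: sum.atLeastLessThan_Suc flip: atLeastLessThanSuc_atLeastAtMost)
  finally show ?thesis
    using assms by (simp add: Lblock4_diag quat_coord_qmult_adj_real quat_coord_Lblock4 flip: of_real_prod)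
qed

lemma cholesky_angle_param_map4:
  "cholesky_angle_param 4 N (map4 N)
     (\<lambda>\<theta> (j, k, s). \<Sum>m\<in>{1..<k}. quat_coord s (qmult_adj (Lblock4 \<theta> j m) (Lblock4 \<theta> k m)))"
proof
  fix \<theta> :: "nat \<times> nat \<Rightarrow> real" and j k s :: nat
  assume "2 \<le> j" "j \<le> N" "1 \<le> k" "k < j" "1 \<le> s" "s \<le> 4"
  then show "map4 N \<theta> (j, k, s) =
      (case (j, k, s) of (j, k, s) \<Rightarrow> \<Sum>m\<in>{1..<k}. quat_coord s (qmult_adj (Lblock4 \<theta> j m) (Lblock4 \<theta> k m)))
      + hypersph_coord (\<lambda>p. \<theta> (j, p)) (4*(k-1)+s) * (\<Prod>p\<in>{1..4*(k-1)}. sin (\<theta> (k, p)))"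
    by (simp add: map4_split)
next
  fix j k s :: nat
  assume "1 \<le> k" "k < j"
  then show "depends_only_on (\<lambda>\<theta>. case (j, k, s) of (j, k, s) \<Rightarrow>
      \<Sum>m\<in>{1..<k}. quat_coord s (qmult_adj (Lblock4 \<theta> j m) (Lblock4 \<theta> k m))) {..(j, 4*(k-1))}"
    using depends_only_on_row_sum[OF Lblock4_depends, of k j "\<lambda>x y. quat_coord s (qmult_adj x y)"]
    by simp
qed

lemma abs_jacobian_det_map2:
  assumes "\<And>j p. 2 \<le> j \<Longrightarrow> j \<le> N \<Longrightarrow> 1 \<le> p \<Longrightarrow> p \<le> 2*j-2 \<Longrightarrow> 0 < \<theta> (j, p) \<and> \<theta> (j, p) < pi"
  shows "\<bar>jacobian_det (angles2 N) (coords2 N) (map2 N) \<theta>\<bar>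
    = (\<Prod>j\<in>{2..N}. \<Prod>p\<in>{1..2*j-2}. sin (\<theta> (j, p)) ^ (2*N-p-1))"
proof -
  have "\<bar>jacobian_det (angles2 N) (coords2 N) (map2 N) \<theta>\<bar>
      = (\<Prod>j\<in>{2..N}. \<Prod>p\<in>{1..2*(j-1)}. sin (\<theta> (j, p)) ^ (2*(N-1)+1-p))"
    unfolding angles2_eq_angle_index coords2_eq_coord_index
    by (rule cholesky_angle_param.abs_jacobian_det[OF cholesky_angle_param_map2])
       (use assms in \<open>auto intro!: sin_gt_zero\<close>)
  also have "\<dots> = (\<Prod>j\<in>{2..N}. \<Prod>p\<in>{1..2*j-2}. sin (\<theta> (j, p)) ^ (2*N-p-1))"
    by (intro prod.cong) (auto intro!: arg_cong[where f="power _"])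
  finally show ?thesis .
qed

lemma abs_jacobian_det_map4:
  assumes "\<And>j p. 2 \<le> j \<Longrightarrow> j \<le> N \<Longrightarrow> 1 \<le> p \<Longrightarrow> p \<le> 4*j-4 \<Longrightarrow> 0 < \<theta> (j, p) \<and> \<theta> (j, p) < pi"
  shows "\<bar>jacobian_det (angles4 N) (coords4 N) (map4 N) \<theta>\<bar>
    = (\<Prod>j\<in>{2..N}. \<Prod>p\<in>{1..4*j-4}. sin (\<theta> (j, p)) ^ (4*N-p-3))"
proof -
  have "\<bar>jacobian_det (angles4 N) (coords4 N) (map4 N) \<theta>\<bar>
      = (\<Prod>j\<in>{2..N}. \<Prod>p\<in>{1..4*(j-1)}. sin (\<theta> (j, p)) ^ (4*(N-1)+1-p))"
    unfolding angles4_eq_angle_index coords4_eq_coord_index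
    by (rule cholesky_angle_param.abs_jacobian_det[OF cholesky_angle_param_map4])
       (use assms in \<open>auto intro!: sin_gt_zero\<close>)
  also have "\<dots> = (\<Prod>j\<in>{2..N}. \<Prod>p\<in>{1..4*j-4}. sin (\<theta> (j, p)) ^ (4*N-p-3))"
    by (intro prod.cong) (auto intro!: arg_cong[where f="power _"])
  finally show ?thesis .
qed

theorem mainTheorem4:
  fixes N :: nat
  assumes "N \<ge> 2"
  shows "(\<forall>\<theta> :: nat \<times> nat \<Rightarrow> real.
            (\<forall>j p. 2 \<le> j \<and> j \<le> N \<and> 1 \<le> p \<and> p \<le> 2*j-2 \<longrightarrow> 0 < \<theta> (j, p) \<and> \<theta> (j, p) < pi) \<longrightarrow>
            \<bar>jacobian_det (angles2 N) (coords2 N) (map2 N) \<theta>\<bar> =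
              (\<Prod>j\<in>{2..N}. \<Prod>p\<in>{1..2*j-2}. sin (\<theta> (j, p)) ^ (2*N-p-1)))
       \<and> (\<forall>\<theta> :: nat \<times> nat \<Rightarrow> real.
            (\<forall>j p. 2 \<le> j \<and> j \<le> N \<and> 1 \<le> p \<and> p \<le> 4*j-4 \<longrightarrow> 0 < \<theta> (j, p) \<and> \<theta> (j, p) < pi) \<longrightarrow>
            \<bar>jacobian_det (angles4 N) (coords4 N) (map4 N) \<theta>\<bar> =
              (\<Prod>j\<in>{2..N}. \<Prod>p\<in>{1..4*j-4}. sin (\<theta> (j, p)) ^ (4*N-p-3)))"
  by (blast intro: abs_jacobian_det_map2 abs_jacobian_det_map4)

end
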